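(* Let $n\in\mathbb{N}$ and positive integers $a_1\ge a_2\ge\dots\ge a_n$, $b$, $c$ with $c>b>a_n$, and consider the words $u=a_1a_2\cdots a_nb$ and $v=a_1a_2\cdots a_nbc$ (which are column words with segments $a_1\cdots a_n\,|\,b$ and $a_1\cdots a_n\,|\,b\,|\,c$). Let $t=\min\{j: b>a_j\}$ and $b'=a_t$. Then: 1. $u$ is twisted Knuth equivalent to a word $b'a'_1\cdots a'_n$ with $b'<a'_1$ and $a'_1\ge a'_2\ge\dots\ge a'_n$; 2. $v$ is twisted Knuth equivalent to a word $b'c'a''_1a''_2\cdots a''_n$ with $b'<c'<a''_1$ and $a''_1\ge a''_2\ge\dots\ge a''_n$.
   Context: A word is a finite sequence of positive integers. Twisted Knuth equivalence $\sim^*$ is the equivalence relation on words generated by: $u\,b\,a\,c\,v\sim^* u\,b\,c\,a\,v$ whenever $c\le b<a$, and $u\,a\,c\,b\,v\sim^* u\,c\,a\,b\,v$ whenever $c<b\le a$, where $a,b,c$ are positive integers and $u,v$ are arbitrary (possibly empty) words. A column word is a word $a_{11}\cdots a_{1c_1}\,a_{21}\cdots a_{2c_2}\cdots a_{k1}\cdots a_{kc_k}$ with $c_1\ge c_2\ge\dots\ge c_k>0$ such that each segment is weakly decreasing ($a_{ij}\ge a_{i,j+1}$) and $a_{i+1,c_{i+1}-j}>a_{i,c_i-j}$ for all $0\le j<c_{i+1}$, $1\le i<k$. *)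

theory Defs
  imports Main
begin

text \<open>Words are lists of natural numbers; positivity of letters is imposed
  as a hypothesis where needed.\<close>

inductive twisted_knuth_step :: "nat list \<Rightarrow> nat list \<Rightarrow> bool" where
  tk1: "c \<le> b \<Longrightarrow> b < a \<Longrightarrow>
        twisted_knuth_step (u @ [b, a, c] @ v) (u @ [b, c, a] @ v)"
| tk2: "c < b \<Longrightarrow> b \<le> a \<Longrightarrow>
        twisted_knuth_step (u @ [a, c, b] @ v) (u @ [c, a, b] @ v)"

definition twisted_knuth_equiv :: "nat list \<Rightarrow> nat list \<Rightarrow> bool" where
  "twisted_knuth_equiv = equivclp twisted_knuth_step"

end

theory Submission
  imports Defs
begin

text \<open>Appending b to the weakly decreasing word as bumps the
  first letter p = as!t below b to the front.  Concretely, b slides left past the letters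
  after p (each move having p as its smaller left neighbour, a move of the first kind), and
  then p slides left past the letters before p (all at least b, each move having b as its
  right neighbour, a move of the second kind).  The result p followed by as[t := b] is again
  weakly decreasing with p below its head.  For v the second letter c is then bumped
  likewise out of as[t := b], at a position no later than t, so that the bumped letter is
  at least b and hence exceeds p.\<close>

lemma twisted_knuth_equiv_trans [trans]:
  "twisted_knuth_equiv x y \<Longrightarrow> twisted_knuth_equiv y z \<Longrightarrow> twisted_knuth_equiv x z"
  unfolding twisted_knuth_equiv_def by (rule equivclp_trans)

lemma twisted_knuth_equiv_refl: "twisted_knuth_equiv x x"
  unfolding twisted_knuth_equiv_def by simp

lemma twisted_knuth_equiv_tk1:
  "c \<le> b \<Longrightarrow> b < a \<Longrightarrow> twisted_knuth_equiv (u @ [b, c, a] @ v) (u @ [b, a, c] @ v)"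
  unfolding twisted_knuth_equiv_def
  by (rule equivclp_sym, rule r_into_equivclp, rule tk1)

lemma twisted_knuth_equiv_tk2:
  "c < b \<Longrightarrow> b \<le> a \<Longrightarrow> twisted_knuth_equiv (u @ [a, c, b] @ v) (u @ [c, a, b] @ v)"
  unfolding twisted_knuth_equiv_def by (rule r_into_equivclp, rule tk2)

lemma twisted_knuth_equiv_slide_larger_left:
  assumes "p < b" and "sorted_wrt (\<ge>) (p # ys)"
  shows "twisted_knuth_equiv (pre @ p # ys @ [b] @ suf) (pre @ [p, b] @ ys @ suf)"
  using assms
proof (induction ys arbitrary: pre p)
  case Nil
  then show ?case by (simp add: twisted_knuth_equiv_refl)
next
  case (Cons y ys)
  then have "y \<le> p" by simp
  have "twisted_knuth_equiv ((pre @ [p]) @ y # ys @ [b] @ suf) ((pre @ [p]) @ [y, b] @ ys @ suf)"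
    using Cons.prems \<open>y \<le> p\<close> by (intro Cons.IH) auto
  moreover have "twisted_knuth_equiv (pre @ [p, y, b] @ ys @ suf) (pre @ [p, b, y] @ ys @ suf)"
    using \<open>y \<le> p\<close> Cons.prems(1) by (intro twisted_knuth_equiv_tk1) auto
  ultimately show ?case by (auto intro: twisted_knuth_equiv_trans)
qed

lemma twisted_knuth_equiv_slide_smaller_left:
  assumes "q < z" and "sorted_wrt (\<ge>) xs" and "\<forall>x\<in>set xs. z \<le> x"
  shows "twisted_knuth_equiv (pre @ xs @ [q, z] @ suf) (pre @ [q] @ xs @ [z] @ suf)"
  using assms
proof (induction xs arbitrary: pre)
  case Nil
  then show ?case by (simp add: twisted_knuth_equiv_refl)
next
  case (Cons x xs)
  have slide: "twisted_knuth_equiv ((pre @ [x]) @ xs @ [q, z] @ suf) ((pre @ [x]) @ [q] @ xs @ [z] @ suf)"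
    using Cons.prems by (intro Cons.IH) auto
  define w where "w = hd (xs @ [z])"
  have w: "q < w" "w \<le> x"
    using Cons.prems by (cases xs; auto simp: w_def)+
  obtain rest where rest: "xs @ z # suf = w # rest"
    by (cases xs) (auto simp: w_def)
  have "twisted_knuth_equiv (pre @ [x, q] @ w # rest) (pre @ [q, x] @ w # rest)"
    using w twisted_knuth_equiv_tk2[of q w x pre rest] by simp
  then have "twisted_knuth_equiv (pre @ [x, q] @ xs @ [z] @ suf) (pre @ [q, x] @ xs @ [z] @ suf)"
    by (simp add: rest)
  with slide show ?case by (auto intro: twisted_knuth_equiv_trans)
qed

definition first_below :: "nat list \<Rightarrow> nat \<Rightarrow> nat \<Rightarrow> bool" where
  "first_below xs b t \<longleftrightarrow> t < length xs \<and> xs ! t < b \<and> (\<forall>j<t. b \<le> xs ! j)"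

lemma first_below_Least:
  assumes "j < length xs" and "xs ! j < b"
  shows "first_below xs b (LEAST j. j < length xs \<and> xs ! j < b)"
  using LeastI[of "\<lambda>j. j < length xs \<and> xs ! j < b", OF conjI, OF assms]
    not_less_Least[of _ "\<lambda>j. j < length xs \<and> xs ! j < b"] less_trans
  unfolding first_below_def by (metis not_le)

lemma first_below_Least_le:
  assumes "j < length xs" and "xs ! j < b"
  shows "(LEAST j. j < length xs \<and> xs ! j < b) \<le> j"
  using assms by (intro Least_le) simp

lemma first_below_split:
  assumes "first_below xs b t"
  obtains ys zs where "xs = ys @ xs ! t # zs" and "xs[t := b] = ys @ b # zs"
    and "\<forall>y\<in>set ys. b \<le> y"
proof
  from assms have t: "t < length xs" and before: "\<forall>j<t. b \<le> xs ! j"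
    unfolding first_below_def by auto
  show "xs = take t xs @ xs ! t # drop (Suc t) xs"
    using t by (simp add: id_take_nth_drop)
  show "xs[t := b] = take t xs @ b # drop (Suc t) xs"
    using t by (simp add: upd_conv_take_nth_drop)
  show "\<forall>y\<in>set (take t xs). b \<le> y"
    using before t by (auto simp: in_set_conv_nth)
qed

lemma twisted_knuth_equiv_bump:
  assumes "sorted_wrt (\<ge>) xs" and "first_below xs b t"
  shows "twisted_knuth_equiv (pre @ xs @ [b] @ suf) (pre @ xs ! t # xs[t := b] @ suf)"
proof -
  obtain ys zs where xs: "xs = ys @ xs ! t # zs" and upd: "xs[t := b] = ys @ b # zs"
    and ys: "\<forall>y\<in>set ys. b \<le> y"
    using assms(2) by (rule first_below_split)
  define p where "p = xs ! t"
  have "p < b" using assms(2) by (simp add: first_below_def p_def)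
  have "sorted_wrt (\<ge>) (ys @ p # zs)"
    using assms(1) xs unfolding p_def by metis
  then have sorted: "sorted_wrt (\<ge>) ys" "sorted_wrt (\<ge>) (p # zs)"
    by (simp_all add: sorted_wrt_append)
  have "pre @ xs @ [b] @ suf = (pre @ ys) @ p # zs @ [b] @ suf"
    by (subst xs) (simp add: p_def)
  also have "twisted_knuth_equiv \<dots> ((pre @ ys) @ [p, b] @ zs @ suf)"
    using \<open>p < b\<close> sorted(2) by (rule twisted_knuth_equiv_slide_larger_left)
  also have "(pre @ ys) @ [p, b] @ zs @ suf = pre @ ys @ [p, b] @ zs @ suf"
    by simp
  also have "twisted_knuth_equiv \<dots> (pre @ [p] @ ys @ [b] @ zs @ suf)"
    using \<open>p < b\<close> sorted(1) ys by (rule twisted_knuth_equiv_slide_smaller_left)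
  also have "pre @ [p] @ ys @ [b] @ zs @ suf = pre @ xs ! t # xs[t := b] @ suf"
    by (simp add: upd p_def)
  finally show ?thesis .
qed

lemma sorted_wrt_ge_bump:
  assumes "sorted_wrt (\<ge>) xs" and "first_below xs b t"
  shows "sorted_wrt (\<ge>) (xs[t := b])"
proof -
  obtain ys zs where xs: "xs = ys @ xs ! t # zs" and upd: "xs[t := b] = ys @ b # zs"
    and ys: "\<forall>y\<in>set ys. b \<le> y"
    using assms(2) by (rule first_below_split)
  define p where "p = xs ! t"
  have "p < b" using assms(2) by (simp add: first_below_def p_def)
  have "sorted_wrt (\<ge>) (ys @ p # zs)"
    using assms(1) xs unfolding p_def by metis
  then have "sorted_wrt (\<ge>) ys" "sorted_wrt (\<ge>) zs" "\<forall>z\<in>set zs. z \<le> p"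
    by (simp_all add: sorted_wrt_append)
  with \<open>p < b\<close> ys show ?thesis
    unfolding upd by (fastforce simp: sorted_wrt_append)
qed

lemma hd_bump_gt:
  assumes "first_below xs b t"
  shows "xs ! t < hd (xs[t := b])"
proof (cases t)
  case 0
  then show ?thesis using assms by (cases xs) (auto simp: first_below_def)
next
  case (Suc k)
  then have "hd (xs[t := b]) = xs ! 0" and "b \<le> xs ! 0" "xs ! t < b"
    using assms by (cases xs; auto simp: first_below_def)+
  then show ?thesis by simp
qed

theorem lemma4p2:
  fixes as :: "nat list" and b c :: nat
  assumes n_pos: "as \<noteq> []"
    and as_pos: "\<forall>x \<in> set as. 0 < x"
    and as_dec: "sorted_wrt (\<ge>) as"
    and b_pos: "0 < b" and c_pos: "0 < c"
    and cb: "b < c" and ban: "last as < b"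
  defines "t \<equiv> LEAST j. j < length as \<and> as ! j < b"
  defines "b' \<equiv> as ! t"
  shows "(\<exists>as'. length as' = length as \<and> sorted_wrt (\<ge>) as' \<and> b' < hd as' \<and>
            twisted_knuth_equiv (as @ [b]) (b' # as'))
       \<and> (\<exists>c' as''. length as'' = length as \<and> sorted_wrt (\<ge>) as'' \<and>
            b' < c' \<and> c' < hd as'' \<and>
            twisted_knuth_equiv (as @ [b, c]) (b' # c' # as''))"
proof -
  have t: "first_below as b t"
    unfolding t_def using n_pos ban by (intro first_below_Least) (simp_all add: last_conv_nth)
  define as' where "as' = as[t := b]"
  have sorted': "sorted_wrt (\<ge>) as'" and "b' < hd as'"
    and bump: "\<And>suf. twisted_knuth_equiv (as @ [b] @ suf) (b' # as' @ suf)"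
    unfolding as'_def b'_def using sorted_wrt_ge_bump[OF as_dec t] hd_bump_gt[OF t]
      twisted_knuth_equiv_bump[OF as_dec t, of "[]"] by simp_all
  have "as' ! t = b" "t < length as'" using t by (simp_all add: as'_def first_below_def)
  define t' where "t' = (LEAST j. j < length as' \<and> as' ! j < c)"
  have t': "first_below as' c t'" and "t' \<le> t"
    unfolding t'_def using \<open>as' ! t = b\<close> \<open>t < length as'\<close> cb
    by (simp_all add: first_below_Least first_below_Least_le)
  define c' where "c' = as' ! t'"
  have "b \<le> c'"
    using \<open>t' \<le> t\<close> t by (cases "t' = t") (auto simp: c'_def as'_def first_below_def)
  have "twisted_knuth_equiv ([b'] @ as' @ [c] @ []) ([b'] @ c' # as'[t' := c] @ [])"
    unfolding c'_def by (rule twisted_knuth_equiv_bump[OF sorted' t'])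
  then have "twisted_knuth_equiv (as @ [b, c]) (b' # c' # as'[t' := c])"
    using bump[of "[c]"] by (auto intro: twisted_knuth_equiv_trans)
  moreover have "b' < c'" using \<open>b \<le> c'\<close> t by (simp add: b'_def first_below_def)
  moreover have "twisted_knuth_equiv (as @ [b]) (b' # as')" using bump[of "[]"] by simp
  moreover have "length as' = length as" "length (as'[t' := c]) = length as"
    by (simp_all add: as'_def)
  ultimately show ?thesis
    using sorted' \<open>b' < hd as'\<close> sorted_wrt_ge_bump[OF sorted' t'] hd_bump_gt[OF t']
    unfolding c'_def by blast
qed

end
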